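(* Let $X \subset \mathbb{R}^{2n}$ be a symplectically self-polar convex body with $C^1$-smooth boundary, $T$ its symplectic outer billiard map, and $Y=\{x+f(x): x\in\partial X\}$. Then $Y\subset\mathbb{R}^{2n}\setminus X$ and $T(Y)=Y$; more precisely $T(x+f(x))=f(x)+f(f(x))$ for every $x\in\partial X$.
   Context: $\mathbb{R}^{2n}\cong\mathbb{C}^n$, $J$ is multiplication by $\sqrt{-1}$, $\omega(u,v)=\langle Ju,v\rangle$. For a convex body $X$ with origin in its interior, $X^\omega=\{y: \omega(x,y)\le 1\ \forall x\in X\}$; $X$ is symplectically self-polar if $X=X^\omega$. For $C^1$ boundary, $f\colon\partial X\to\partial X^\omega$ assigns to $x$ the unique $f(x)\in X^\omega$ with $\omega(x,f(x))=1$. Symplectic outer billiard map: for a strictly convex body $X$ with $C^1$ boundary and $z\notin X$, there is a unique $x\in\partial X$ such that the line through $z,x$ is the characteristic line $\ker(\omega|_{T_x\partial X})$ and $\omega(x,x-z)>0$; then $T(z)=2x-z$. *)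

theory Defs
  imports "HOL-Analysis.Analysis"
begin

text \<open>R^{2n} is identified with C^n = complex^'n; the real inner product is the
  standard one (sum of Re (x_i * cnj y_i)).\<close>

definition J :: "complex^'n \<Rightarrow> complex^'n" where
  "J u = (\<chi> i. \<i> * (u $ i))"

definition symp :: "complex^'n \<Rightarrow> complex^'n \<Rightarrow> real" where
  "symp u v = inner (J u) v"

definition convex_body :: "(complex^'n) set \<Rightarrow> bool" where
  "convex_body X \<longleftrightarrow> compact X \<and> convex X \<and> 0 \<in> interior X"

definition symp_polar :: "(complex^'n) set \<Rightarrow> (complex^'n) set" where
  "symp_polar X = {y. \<forall>x\<in>X. symp x y \<le> 1}"

definition C1_boundary :: "(complex^'n) set \<Rightarrow> bool" where
  "C1_boundary X \<longleftrightarrow> (\<forall>x\<in>frontier X. \<exists>U g G. open U \<and> x \<in> U \<and>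
      (\<forall>y\<in>U. (g has_derivative (\<lambda>v. inner (G y) v)) (at y)) \<and>
      continuous_on U G \<and> G x \<noteq> 0 \<and>
      frontier X \<inter> U = {y\<in>U. g y = (0::real)})"

definition tangent_space :: "(complex^'n) set \<Rightarrow> complex^'n \<Rightarrow> (complex^'n) set" where
  "tangent_space S x = {v. \<exists>\<gamma> e. e > 0 \<and> \<gamma> 0 = x \<and> (\<forall>t\<in>{-e<..<e}. \<gamma> t \<in> S) \<and>
      (\<gamma> has_vector_derivative v) (at (0::real))}"

definition char_line :: "(complex^'n) set \<Rightarrow> complex^'n \<Rightarrow> (complex^'n) set" where
  "char_line X x = {u \<in> tangent_space (frontier X) x.
      \<forall>v\<in>tangent_space (frontier X) x. symp u v = 0}"

definition polar_map :: "(complex^'n) set \<Rightarrow> complex^'n \<Rightarrow> complex^'n" where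
  "polar_map X x = (THE y. y \<in> symp_polar X \<and> symp x y = 1)"

text \<open>Symplectic outer billiard map: the line through z and x is x + char_line X x,
  i.e. z - x lies in the characteristic line (z \<noteq> x as z is outside X).\<close>
definition outer_billiard :: "(complex^'n) set \<Rightarrow> complex^'n \<Rightarrow> complex^'n" where
  "outer_billiard X z = (let x = (THE x. x \<in> frontier X \<and> z - x \<in> char_line X x
       \<and> symp x (x - z) > 0) in 2 *\<^sub>R x - z)"

end

theory Submission
  imports Defs
begin

text \<open>Self-polarity makes symp x y \<le> 1 on X \<times> X, with equality exactly for the pairs (x, f x),
  x on the boundary.  The C^1 boundary has a unique supporting hyperplane at each point, so
  f is well defined, maps the boundary to itself, satisfies f (f x) = - x, and the tangent
  space at f x is the symp-orthogonal of x; hence x spans the characteristic line at f x and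
  the billiard line through z = x + f x touches X at f x, giving T z = 2 f x - z =
  f x + f (f x).  That f x is the only admissible touching point follows by pairing z with x
  and with the polar point of a competitor, using symp \<le> 1 on X.  Finally every x + f x is
  the image of w + f w for w = - f x.\<close>

lemma orthogonal_subset_imp_parallel:
  fixes a b :: "'a::real_inner"
  assumes "a \<noteq> 0" and "{v. inner a v = 0} \<subseteq> {v. inner b v = 0}"
  shows "\<exists>c. b = c *\<^sub>R a"
proof -
  define c where "c = inner b a / inner a a"
  define v where "v = b - c *\<^sub>R a"
  have "inner a v = 0"
    using assms(1) by (simp add: v_def c_def inner_diff_right inner_commute)
  then have "inner b v = 0" using assms(2) by blast
  then have "inner v v = 0"
    using \<open>inner a v = 0\<close> by (simp add: v_def inner_diff_left inner_commute)
  then have "b = c *\<^sub>R a" by (simp add: v_def)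
  then show ?thesis ..
qed

lemma normal_eq_if_orthogonal_subset:
  fixes a b :: "'a::real_inner"
  assumes "a \<noteq> 0" "{v. inner a v = 0} \<subseteq> {v. inner b v = 0}" "inner a p = inner b p" "inner a p \<noteq> 0"
  shows "a = b"
  using orthogonal_subset_imp_parallel[OF assms(1,2)] assms(3,4) by auto

lemma zero_set_approximates_tangent_line:
  fixes g :: "'a::real_inner \<Rightarrow> real"
  assumes "open U" "p \<in> U" and g: "\<forall>y\<in>U. (g has_derivative (\<lambda>v. inner (G y) v)) (at y)"
    and "g p = 0" "G p \<noteq> 0" "inner (G p) v = 0" and "\<epsilon> > 0"
  shows "\<exists>\<delta>>0. \<forall>t. 0 < \<bar>t\<bar> \<and> \<bar>t\<bar> < \<delta> \<longrightarrow>
           (\<exists>q\<in>U. g q = 0 \<and> norm (q - (p + t *\<^sub>R v)) \<le> \<epsilon> * \<bar>t\<bar>)"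
proof -
  define a where "a = G p"
  define M where "M = norm v + \<epsilon>"
  define \<eta> where "\<eta> = \<epsilon> * norm a / (2 * M)"
  have a: "norm a > 0" "inner a v = 0" using assms by (auto simp: a_def)
  have M: "M > 0" using \<open>\<epsilon> > 0\<close> by (simp add: M_def add_nonneg_pos)
  have "\<eta> > 0" using \<open>\<epsilon> > 0\<close> a M by (simp add: \<eta>_def)
  then obtain d where "d > 0" and d: "\<And>y. norm (y - p) < d \<Longrightarrow>
      norm (g y - g p - inner a (y - p)) \<le> \<eta> * norm (y - p)"
    using g \<open>p \<in> U\<close> unfolding has_derivative_at_alt a_def by blast
  obtain r where "r > 0" and r: "ball p r \<subseteq> U" using assms(1,2) open_contains_ball by blast
  have gcont: "continuous_on U g"
    using g by (meson continuous_at_imp_continuous_on has_derivative_continuous)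
  show ?thesis
  proof (intro exI[of _ "min d r / M"] conjI allI impI)
    show "min d r / M > 0" using \<open>d > 0\<close> \<open>r > 0\<close> M by simp
    fix t :: real assume t: "0 < \<bar>t\<bar> \<and> \<bar>t\<bar> < min d r / M"
    define s0 where "s0 = \<epsilon> * \<bar>t\<bar> / norm a"
    have s0: "s0 > 0" "s0 * norm a = \<epsilon> * \<bar>t\<bar>" using t \<open>\<epsilon> > 0\<close> a by (auto simp: s0_def)
    define w where "w s = p + t *\<^sub>R v + s *\<^sub>R a" for s
    have w_p: "norm (w s - p) \<le> \<bar>t\<bar> * M" if "\<bar>s\<bar> \<le> s0" for s
    proof -
      have "norm (w s - p) \<le> \<bar>t\<bar> * norm v + \<bar>s\<bar> * norm a"
        using norm_triangle_ineq[of "t *\<^sub>R v" "s *\<^sub>R a"] by (simp add: w_def)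
      also have "\<dots> \<le> \<bar>t\<bar> * M"
        using mult_right_mono[OF that, of "norm a"] s0(2) by (simp add: M_def algebra_simps)
      finally show ?thesis .
    qed
    have tM: "\<bar>t\<bar> * M < min d r" using t M by (simp add: pos_less_divide_eq mult.commute)
    have wU: "w s \<in> U" if "\<bar>s\<bar> \<le> s0" for s
      using w_p[OF that] tM r by (auto simp: dist_norm norm_minus_commute)
    have g_w: "\<bar>g (w s) - s * (norm a)\<^sup>2\<bar> \<le> s0 * (norm a)\<^sup>2 / 2" if "\<bar>s\<bar> \<le> s0" for s
    proof -
      have "inner a (w s - p) = s * (norm a)\<^sup>2"
        by (simp add: w_def inner_add_right a power2_norm_eq_inner)
      then have "\<bar>g (w s) - s * (norm a)\<^sup>2\<bar> \<le> \<eta> * norm (w s - p)"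
        using d[of "w s"] w_p[OF that] tM \<open>g p = 0\<close> by simp
      also have "\<dots> \<le> \<eta> * (\<bar>t\<bar> * M)"
        using w_p[OF that] \<open>\<eta> > 0\<close> by (simp add: mult_left_mono)
      also have "\<dots> = s0 * (norm a)\<^sup>2 / 2"
        using M s0(2) by (simp add: \<eta>_def power2_eq_square field_simps)
      finally show ?thesis .
    qed
    have "continuous_on {-s0..s0} (\<lambda>s. g (w s))"
      using wU by (intro continuous_on_compose2[OF gcont]) (auto simp: w_def intro!: continuous_intros)
    moreover have "g (w (-s0)) \<le> 0" "0 \<le> g (w s0)"
    proof -
      have "0 < s0 * (norm a)\<^sup>2" using s0 a by simp
      moreover have "\<bar>s0\<bar> \<le> s0" "\<bar>-s0\<bar> \<le> s0" using s0 by auto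
      ultimately show "g (w (-s0)) \<le> 0" "0 \<le> g (w s0)"
        using g_w[of s0] g_w[of "-s0"] by (auto simp only: abs_le_iff) linarith+
    qed
    ultimately obtain s where s: "\<bar>s\<bar> \<le> s0" "g (w s) = 0"
      using IVT'[of "\<lambda>s. g (w s)" "-s0" 0 s0] s0 by (force simp: abs_le_iff)
    moreover have "norm (w s - (p + t *\<^sub>R v)) \<le> \<epsilon> * \<bar>t\<bar>"
      using mult_right_mono[OF s(1), of "norm a"] s0(2) by (simp add: w_def)
    ultimately show "\<exists>q\<in>U. g q = 0 \<and> norm (q - (p + t *\<^sub>R v)) \<le> \<epsilon> * \<bar>t\<bar>"
      using wU by blast
  qed
qed

lemma tangent_space_if_approximated:
  fixes S :: "(complex^'n) set"
  assumes "closed S" "p \<in> S"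
    and approx: "\<And>\<epsilon>. \<epsilon> > 0 \<Longrightarrow> \<exists>\<delta>>0. \<forall>t. 0 < \<bar>t\<bar> \<and> \<bar>t\<bar> < \<delta> \<longrightarrow>
                   (\<exists>q\<in>S. norm (q - (p + t *\<^sub>R v)) \<le> \<epsilon> * \<bar>t\<bar>)"
  shows "v \<in> tangent_space S p"
proof -
  define \<gamma> where "\<gamma> t = closest_point S (p + t *\<^sub>R v)" for t :: real
  have \<gamma>: "\<gamma> t \<in> S" "\<And>y. y \<in> S \<Longrightarrow> dist (p + t *\<^sub>R v) (\<gamma> t) \<le> dist (p + t *\<^sub>R v) y" for t
    using assms(1,2) closest_point_in_set closest_point_le unfolding \<gamma>_def by blast+
  have "\<gamma> 0 = p" using assms(2) closest_point_self by (simp add: \<gamma>_def)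
  have "(\<gamma> has_derivative (\<lambda>t. t *\<^sub>R v)) (at 0)"
    unfolding has_derivative_at'
  proof (intro conjI allI impI bounded_linear_scaleR_left)
    fix \<epsilon> :: real assume "\<epsilon> > 0"
    then obtain \<delta> where "\<delta> > 0" and \<delta>: "\<And>t. 0 < \<bar>t\<bar> \<Longrightarrow> \<bar>t\<bar> < \<delta> \<Longrightarrow>
        \<exists>q\<in>S. norm (q - (p + t *\<^sub>R v)) \<le> \<epsilon> / 2 * \<bar>t\<bar>"
      using approx[of "\<epsilon> / 2"] by auto
    show "\<exists>d>0. \<forall>t. 0 < norm (t - 0) \<and> norm (t - 0) < d \<longrightarrow>
        norm (\<gamma> t - \<gamma> 0 - (t - 0) *\<^sub>R v) / norm (t - 0) < \<epsilon>"
    proof (intro exI[of _ \<delta>] conjI allI impI)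
      fix t :: real assume t: "0 < norm (t - 0) \<and> norm (t - 0) < \<delta>"
      then obtain q where "q \<in> S" "norm (q - (p + t *\<^sub>R v)) \<le> \<epsilon> / 2 * \<bar>t\<bar>"
        using \<delta> by auto
      then have "norm (\<gamma> t - \<gamma> 0 - t *\<^sub>R v) \<le> \<epsilon> / 2 * \<bar>t\<bar>"
        using \<gamma>(2)[of q t] \<open>\<gamma> 0 = p\<close> by (simp add: dist_norm norm_minus_commute algebra_simps)
      also have "\<dots> < \<epsilon> * \<bar>t\<bar>" using \<open>\<epsilon> > 0\<close> t by simp
      finally show "norm (\<gamma> t - \<gamma> 0 - (t - 0) *\<^sub>R v) / norm (t - 0) < \<epsilon>"
        using t by (simp add: divide_less_eq)
    qed (rule \<open>\<delta> > 0\<close>)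
  qed
  then show ?thesis
    unfolding tangent_space_def has_vector_derivative_def
    using \<gamma>(1) \<open>\<gamma> 0 = p\<close> by (intro CollectI exI[of _ \<gamma>] exI[of _ 1]) auto
qed

lemma tangent_space_regular_zero_set:
  fixes S :: "(complex^'n) set"
  assumes "closed S" "p \<in> S" "open U" "p \<in> U"
    and "\<forall>y\<in>U. (g has_derivative (\<lambda>v. inner (G y) v)) (at y)"
    and zero_set: "S \<inter> U = {y\<in>U. g y = 0}" and "G p \<noteq> 0" "inner (G p) v = 0"
  shows "v \<in> tangent_space S p"
proof (rule tangent_space_if_approximated[OF assms(1,2)])
  fix \<epsilon> :: real assume "\<epsilon> > 0"
  have "g p = 0" using assms(2,4) zero_set by blast
  with zero_set_approximates_tangent_line[OF assms(3-5) _ assms(7,8) \<open>\<epsilon> > 0\<close>]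
  show "\<exists>\<delta>>0. \<forall>t. 0 < \<bar>t\<bar> \<and> \<bar>t\<bar> < \<delta> \<longrightarrow> (\<exists>q\<in>S. norm (q - (p + t *\<^sub>R v)) \<le> \<epsilon> * \<bar>t\<bar>)"
    using zero_set by blast
qed

lemma tangent_space_orthogonal_supporting_normal:
  fixes S X :: "(complex^'n) set"
  assumes "S \<subseteq> X" and "\<forall>w\<in>X. inner N w \<le> inner N p" and "v \<in> tangent_space S p"
  shows "inner N v = 0"
proof -
  obtain \<gamma> e where "e > 0" "\<gamma> 0 = p" and \<gamma>S: "\<forall>t\<in>{-e<..<e}. \<gamma> t \<in> S"
    and \<gamma>': "(\<gamma> has_vector_derivative v) (at 0)"
    using assms(3) unfolding tangent_space_def by blast
  have "((\<lambda>t. inner N (\<gamma> t)) has_real_derivative inner N v) (at 0)"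
    by (rule has_derivative_imp_has_field_derivative
        [OF has_derivative_inner_right[OF \<gamma>'[unfolded has_vector_derivative_def]]]) simp
  moreover have "\<forall>t. \<bar>0 - t\<bar> < e \<longrightarrow> inner N (\<gamma> t) \<le> inner N (\<gamma> 0)"
    using \<gamma>S assms(1,2) \<open>\<gamma> 0 = p\<close> by (force simp: abs_less_iff)
  ultimately show ?thesis using DERIV_local_max \<open>e > 0\<close> by blast
qed

lemma J_J: "J (J u) = - u"
  by (simp add: J_def vec_eq_iff)

lemma J_add: "J (u + v) = J u + J v"
  by (simp add: J_def vec_eq_iff algebra_simps)

lemma J_diff: "J (u - v) = J u - J v"
  by (simp add: J_def vec_eq_iff algebra_simps)

lemma J_minus: "J (- u) = - J u"
  by (simp add: J_def vec_eq_iff)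

lemma J_scaleR: "J (c *\<^sub>R u) = c *\<^sub>R J u"
  by (simp add: J_def vec_eq_iff scaleR_conv_of_real)

lemma J_eq_0_iff: "J u = 0 \<longleftrightarrow> u = 0"
  by (simp add: J_def vec_eq_iff)

lemma inner_J_J: "inner (J u) (J v) = inner u v"
  by (simp add: J_def inner_vec_def inner_complex_def algebra_simps)

lemma norm_J: "norm (J u) = norm u"
  by (simp add: norm_eq_sqrt_inner inner_J_J)

lemma symp_antisym: "symp u v = - symp v u"
  by (simp add: symp_def J_def inner_vec_def inner_complex_def algebra_simps sum_negf[symmetric])

lemma symp_self: "symp u u = 0"
  by (simp add: symp_def J_def inner_vec_def inner_complex_def algebra_simps)

lemma symp_add_left: "symp (u + v) w = symp u w + symp v w"
  by (simp add: symp_def J_add inner_add_left)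

lemma symp_add_right: "symp u (v + w) = symp u v + symp u w"
  by (simp add: symp_def inner_add_right)

lemma symp_minus_left: "symp (- u) v = - symp u v"
  by (simp add: symp_def J_minus)

lemma symp_minus_right: "symp u (- v) = - symp u v"
  by (simp add: symp_def)

lemma symp_scaleR_left: "symp (c *\<^sub>R u) v = c * symp u v"
  by (simp add: symp_def J_scaleR)

lemma symp_scaleR_right: "symp u (c *\<^sub>R v) = c * symp u v"
  by (simp add: symp_def)

lemma inner_minus_J_eq_symp: "inner (- J y) w = symp w y"
  using symp_antisym[of y w] by (simp add: symp_def inner_commute)

locale symp_self_polar_body =
  fixes X :: "(complex^'n) set"
  assumes convex_body: "convex_body X" and self_polar: "symp_polar X = X" and C1: "C1_boundary X"
begin

lemma closed: "closed X"
  using convex_body by (simp add: convex_body_def compact_imp_closed)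

lemma frontier_iff: "p \<in> frontier X \<longleftrightarrow> p \<in> X \<and> p \<notin> interior X"
  using closed by (simp add: frontier_def)

lemma frontier_subset: "frontier X \<subseteq> X"
  using frontier_iff by blast

lemma frontier_nonzero: "p \<in> frontier X \<Longrightarrow> p \<noteq> 0"
  using convex_body frontier_iff by (auto simp: convex_body_def)

lemma symp_le_one: "x \<in> X \<Longrightarrow> y \<in> X \<Longrightarrow> symp x y \<le> 1"
  using self_polar by (auto simp: symp_polar_def)

lemma mem_if_symp_le_one: "(\<And>x. x \<in> X \<Longrightarrow> symp x y \<le> 1) \<Longrightarrow> y \<in> X"
  using self_polar by (auto simp: symp_polar_def)

lemma uminus_mem: "x \<in> X \<Longrightarrow> - x \<in> X"
  by (rule mem_if_symp_le_one) (metis symp_le_one symp_antisym symp_minus_right minus_minus)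

lemma symp_eq_one_not_interior:
  assumes "p \<in> X" "y \<in> X" "symp p y = 1"
  shows "p \<notin> interior X"
proof
  assume "p \<in> interior X"
  then obtain r where "r > 0" and r: "ball p r \<subseteq> X" by (auto simp: mem_interior)
  have "y \<noteq> 0" using assms(3) by (auto simp: symp_def)
  define k where "k = r / 2 / norm y"
  have "k > 0" using \<open>r > 0\<close> \<open>y \<noteq> 0\<close> by (simp add: k_def)
  \<comment> \<open>Moving from p in the direction -J y increases symp _ y, leaving the self-polar body.\<close>
  have "p - k *\<^sub>R J y \<in> X"
    using r \<open>r > 0\<close> \<open>y \<noteq> 0\<close> by (auto simp: k_def dist_norm norm_J intro!: subsetD[OF r])
  moreover have "symp (p - k *\<^sub>R J y) y = 1 + k * inner y y"
    using assms(3) by (simp add: symp_def J_diff J_scaleR J_J inner_add_left)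
  moreover have "k * inner y y > 0" using \<open>k > 0\<close> \<open>y \<noteq> 0\<close> by simp
  ultimately show False using symp_le_one[OF _ assms(2)] by fastforce
qed

lemma symp_eq_one_frontier:
  assumes "p \<in> X" "y \<in> X" "symp p y = 1"
  shows "p \<in> frontier X" "y \<in> frontier X"
proof -
  have "symp y (- p) = 1" using assms(3) by (simp add: symp_minus_right symp_antisym[of y])
  then show "p \<in> frontier X" "y \<in> frontier X"
    using assms symp_eq_one_not_interior uminus_mem frontier_iff by blast+
qed

lemma exists_symp_eq_one:
  assumes "p \<in> frontier X"
  shows "\<exists>y\<in>X. symp p y = 1"
proof -
  have "interior X = rel_interior X" "0 \<in> interior X"
    using convex_body rel_interior_nonempty_interior by (auto simp: convex_body_def)
  moreover have "convex X" using convex_body by (simp add: convex_body_def)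
  ultimately obtain a where a: "\<And>w. w \<in> X \<Longrightarrow> inner a p \<le> inner a w" "inner a p < 0"
    using supporting_hyperplane_relative_frontier[of X p] assms closed frontier_iff
    by (metis closure_closed inner_zero_right)
  define y where "y = J ((1 / inner a p) *\<^sub>R a)"
  have "y \<in> X"
  proof (rule mem_if_symp_le_one)
    fix w assume "w \<in> X"
    then show "symp w y \<le> 1"
      using a(1)[OF \<open>w \<in> X\<close>] a(2)
      by (simp add: y_def symp_def inner_J_J inner_commute divide_le_eq_1_neg)
  qed
  moreover have "symp p y = 1"
    using a by (simp add: y_def symp_def inner_J_J inner_commute)
  ultimately show ?thesis by blast
qed

lemma tangent_space_frontier:
  assumes "p \<in> frontier X" "N \<noteq> 0" "\<forall>w\<in>X. inner N w \<le> inner N p"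
  shows "tangent_space (frontier X) p = {v. inner N v = 0}"
proof -
  obtain U g G where "open U" "p \<in> U"
    and g: "\<forall>y\<in>U. (g has_derivative (\<lambda>v. inner (G y) v)) (at y)"
    and "G p \<noteq> 0" and zero_set: "frontier X \<inter> U = {y\<in>U. g y = 0}"
    using bspec[OF C1[unfolded C1_boundary_def] assms(1)] by (elim exE conjE) (rule that)
  have sub: "tangent_space (frontier X) p \<subseteq> {v. inner N v = 0}"
    using tangent_space_orthogonal_supporting_normal[OF frontier_subset assms(3)] by blast
  have sup: "{v. inner (G p) v = 0} \<subseteq> tangent_space (frontier X) p"
    using tangent_space_regular_zero_set[OF frontier_closed assms(1) \<open>open U\<close> \<open>p \<in> U\<close> g zero_set
        \<open>G p \<noteq> 0\<close>] by blast
  obtain c where "N = c *\<^sub>R G p"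
    using orthogonal_subset_imp_parallel[OF \<open>G p \<noteq> 0\<close>] sub sup by blast
  with assms(2) sub sup show ?thesis by auto
qed

lemma symp_eq_one_supporting_normal:
  assumes "y \<in> X" "symp p y = 1"
  shows "- J y \<noteq> 0" "\<forall>w\<in>X. inner (- J y) w \<le> inner (- J y) p" "inner (- J y) p = 1"
proof -
  have "y \<noteq> 0" using assms(2) by (auto simp: symp_def)
  then show "- J y \<noteq> 0" "\<forall>w\<in>X. inner (- J y) w \<le> inner (- J y) p" "inner (- J y) p = 1"
    using assms symp_le_one unfolding inner_minus_J_eq_symp by (auto simp: J_eq_0_iff)
qed

lemma symp_eq_one_unique:
  assumes "p \<in> frontier X" "y \<in> X" "symp p y = 1" "y' \<in> X" "symp p y' = 1"
  shows "y = y'"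
proof -
  note normal = symp_eq_one_supporting_normal[OF assms(2,3)]
  note normal' = symp_eq_one_supporting_normal[OF assms(4,5)]
  have "{v. inner (- J y) v = 0} = {v. inner (- J y') v = 0}"
    using tangent_space_frontier[OF assms(1) normal(1,2)] tangent_space_frontier[OF assms(1) normal'(1,2)]
    by simp
  then have "- J y = - J y'"
    using normal_eq_if_orthogonal_subset[OF normal(1), of "- J y'" p] normal(3) normal'(3) by simp
  then show ?thesis by (metis J_J minus_minus)
qed

lemma polar_map:
  assumes "p \<in> frontier X"
  shows "polar_map X p \<in> X" "symp p (polar_map X p) = 1"
proof -
  obtain y where "y \<in> X" "symp p y = 1" using exists_symp_eq_one[OF assms] by blast
  then have "\<exists>!y. y \<in> symp_polar X \<and> symp p y = 1"
    using symp_eq_one_unique[OF assms] self_polar by auto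
  from theI'[OF this] show "polar_map X p \<in> X" "symp p (polar_map X p) = 1"
    unfolding polar_map_def self_polar by auto
qed

lemma polar_map_eq:
  assumes "p \<in> frontier X" "y \<in> X" "symp p y = 1"
  shows "polar_map X p = y"
  using symp_eq_one_unique[OF assms(1) polar_map[OF assms(1)] assms(2,3)] .

lemma polar_map_frontier: "p \<in> frontier X \<Longrightarrow> polar_map X p \<in> frontier X"
  using symp_eq_one_frontier(2) polar_map frontier_subset by blast

lemma polar_map_polar_map:
  assumes "p \<in> frontier X"
  shows "polar_map X (polar_map X p) = - p"
proof (rule polar_map_eq[OF polar_map_frontier[OF assms]])
  show "- p \<in> X" using assms frontier_subset uminus_mem by blast
  show "symp (polar_map X p) (- p) = 1"
    using polar_map(2)[OF assms] by (simp add: symp_minus_right symp_antisym[of "polar_map X p"])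
qed

lemma polar_map_uminus_polar_map:
  assumes "p \<in> frontier X"
  shows "- polar_map X p \<in> frontier X" "polar_map X (- polar_map X p) = p"
proof -
  have "- polar_map X p \<in> X" "p \<in> X" "symp (- polar_map X p) p = 1"
    using polar_map[OF assms] assms frontier_subset uminus_mem
    by (auto simp: symp_minus_left symp_antisym[of "polar_map X p"])
  then show "- polar_map X p \<in> frontier X" "polar_map X (- polar_map X p) = p"
    using symp_eq_one_frontier(1) polar_map_eq by blast+
qed

lemma add_polar_map_not_mem:
  assumes "x \<in> frontier X"
  shows "x + polar_map X x \<notin> X"
proof
  assume "x + polar_map X x \<in> X"
  moreover have "symp x (x + polar_map X x) = 1"
    using polar_map(2)[OF assms] by (simp add: symp_add_right symp_self)
  ultimately have "polar_map X x = x + polar_map X x" using polar_map_eq[OF assms] by blast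
  then show False using frontier_nonzero[OF assms] by simp
qed

lemma mem_char_line_polar_map:
  assumes "x \<in> frontier X"
  shows "x \<in> char_line X (polar_map X x)"
proof -
  have "\<forall>w\<in>X. inner (J x) w \<le> inner (J x) (polar_map X x)"
    using polar_map[OF assms] symp_le_one assms frontier_subset by (auto simp: symp_def)
  then have "tangent_space (frontier X) (polar_map X x) = {v. inner (J x) v = 0}"
    using tangent_space_frontier[OF polar_map_frontier[OF assms]] frontier_nonzero[OF assms]
    by (simp add: J_eq_0_iff)
  then show ?thesis
    using symp_self[of x] unfolding char_line_def symp_def by simp
qed

lemma char_line_parallel_polar_map:
  assumes "p \<in> frontier X" "u \<in> char_line X p"
  shows "\<exists>c. u = c *\<^sub>R polar_map X p"
proof -
  note normal = symp_eq_one_supporting_normal[OF polar_map[OF assms(1)]]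
  have "{v. inner (- J (polar_map X p)) v = 0} \<subseteq> {v. inner (J u) v = 0}"
    using assms(2) tangent_space_frontier[OF assms(1) normal(1,2)]
    by (auto simp: char_line_def symp_def)
  then obtain c where "J u = c *\<^sub>R - J (polar_map X p)"
    using orthogonal_subset_imp_parallel[OF normal(1)] by blast
  then have "J (u - (- c) *\<^sub>R polar_map X p) = 0" by (simp add: J_diff J_add J_scaleR)
  then have "u = (- c) *\<^sub>R polar_map X p" by (simp only: J_eq_0_iff right_minus_eq)
  then show ?thesis ..
qed

lemmas symp_bilinear = symp_add_left symp_add_right symp_scaleR_left symp_scaleR_right
  symp_minus_left symp_minus_right symp_self

lemma outer_billiard_base_point_unique:
  assumes x: "x \<in> frontier X" and q: "q \<in> frontier X"
    and line: "x + polar_map X x - q \<in> char_line X q"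
    and orient: "symp q (q - (x + polar_map X x)) > 0"
  shows "q = polar_map X x"
proof -
  define y where "y = polar_map X q"
  define z where "z = x + polar_map X x"
  have y: "y \<in> X" "symp q y = 1" using polar_map[OF q] by (auto simp: y_def)
  have fx: "polar_map X x \<in> X" "symp x (polar_map X x) = 1" using polar_map[OF x] by auto
  obtain c where z: "z = q + c *\<^sub>R y"
    using char_line_parallel_polar_map[OF q line] by (auto simp: y_def z_def algebra_simps)
  have "c < 0" using orient y(2) by (simp add: z_def[symmetric] z symp_bilinear)
  \<comment> \<open>Pair z with y and with x; the self-polarity bounds force symp x y = 0.\<close>
  have "symp z y = 1" using y(2) by (simp add: z symp_bilinear)
  moreover have "symp (polar_map X x) y \<le> 1" using symp_le_one[OF fx(1) y(1)] .
  ultimately have "symp x y \<ge> 0" by (simp add: z_def symp_bilinear)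
  have "symp z x = - 1" using fx(2) by (simp add: z_def symp_bilinear symp_antisym[of "polar_map X x"])
  moreover have "symp x q \<le> 1" using symp_le_one x q frontier_subset by blast
  ultimately have "c * symp y x \<le> 0"
    by (simp add: z symp_bilinear symp_antisym[of q x])
  then have "symp x y \<le> 0"
    using \<open>c < 0\<close> by (simp add: symp_antisym[of y x] zero_le_mult_iff)
  with \<open>symp x y \<ge> 0\<close> \<open>symp z y = 1\<close> have "symp y (- polar_map X x) = 1"
    by (simp add: z_def symp_bilinear symp_antisym[of y])
  then have "polar_map X y = - polar_map X x"
    using polar_map_eq[OF polar_map_frontier[OF q]] uminus_mem[OF fx(1)] by (simp add: y_def)
  then show ?thesis using polar_map_polar_map[OF q] by (simp add: y_def)
qed

lemma outer_billiard_add_polar_map: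
  assumes x: "x \<in> frontier X"
  shows "outer_billiard X (x + polar_map X x) = polar_map X x + polar_map X (polar_map X x)"
proof -
  have "(THE q. q \<in> frontier X \<and> x + polar_map X x - q \<in> char_line X q
      \<and> symp q (q - (x + polar_map X x)) > 0) = polar_map X x"
  proof (rule the_equality)
    have "symp (polar_map X x) (- x) = 1"
      using polar_map(2)[OF x] by (simp add: symp_minus_right symp_antisym[of "polar_map X x"])
    then show "polar_map X x \<in> frontier X \<and> x + polar_map X x - polar_map X x \<in> char_line X (polar_map X x)
        \<and> symp (polar_map X x) (polar_map X x - (x + polar_map X x)) > 0"
      using polar_map_frontier[OF x] mem_char_line_polar_map[OF x] by simp
  qed (use outer_billiard_base_point_unique[OF x] in blast)
  then show ?thesis
    using polar_map_polar_map[OF x] by (simp add: outer_billiard_def Let_def scaleR_2 algebra_simps)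
qed

lemma outer_billiard_image:
  "outer_billiard X ` (\<lambda>x. x + polar_map X x) ` frontier X = (\<lambda>x. x + polar_map X x) ` frontier X"
  (is "?T ` ?Y = ?Y")
proof
  show "?T ` ?Y \<subseteq> ?Y"
  proof
    fix q assume "q \<in> ?T ` ?Y"
    then obtain x where x: "x \<in> frontier X" and "q = ?T (x + polar_map X x)" by blast
    then have "q = polar_map X x + polar_map X (polar_map X x)"
      using outer_billiard_add_polar_map by simp
    then show "q \<in> ?Y" using polar_map_frontier[OF x] by blast
  qed
  show "?Y \<subseteq> ?T ` ?Y"
  proof
    fix q assume "q \<in> ?Y"
    then obtain x where x: "x \<in> frontier X" and q: "q = x + polar_map X x" by blast
    define w where "w = - polar_map X x"
    have w: "w \<in> frontier X" "polar_map X w = x"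
      using polar_map_uminus_polar_map[OF x] by (simp_all add: w_def)
    then have "?T (w + polar_map X w) = q"
      using outer_billiard_add_polar_map[OF w(1)] q by simp
    moreover have "w + polar_map X w \<in> ?Y" using w(1) by blast
    ultimately show "q \<in> ?T ` ?Y" by blast
  qed
qed

end

theorem mainTheorem6:
  fixes X :: "(complex^'n) set"
  assumes "convex_body X" and "symp_polar X = X" and "C1_boundary X"
  defines "f \<equiv> polar_map X" and "T \<equiv> outer_billiard X"
      and "Y \<equiv> (\<lambda>x. x + polar_map X x) ` frontier X"
  shows "Y \<subseteq> - X \<and> T ` Y = Y \<and> (\<forall>x\<in>frontier X. T (x + f x) = f x + f (f x))"
proof -
  interpret symp_self_polar_body X using assms(1-3) by unfold_locales
  show ?thesis
    using add_polar_map_not_mem outer_billiard_image outer_billiard_add_polar_map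
    unfolding f_def T_def Y_def by blast
qed

end
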